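(* Let $\mathcal C\subseteq 2^{[n]}$ be a stable hyperplane code. Then $\mathcal C$ has no strong bitflip local obstructions; that is, there is no pair $(g,\tau)$ with $g\in(\mathbb Z_2)^n$ and $\tau\subseteq[n]$ such that $\tau\notin g\cdot\mathcal C$ and $\operatorname{link}_\tau\Delta(g\cdot\mathcal C)$ is not collapsible.
   Context: A code is a subset $\mathcal C\subseteq 2^{[n]}$, $[n]=\{1,\dots,n\}$. An oriented affine hyperplane in $\mathbb R^d$ is $H=\{x: w\cdot x-h=0\}$ with $w\in\mathbb R^d\setminus\{0\}$, $h\in\mathbb R$, and open half-spaces $H^+=\{x:w\cdot x-h>0\}$, $H^-=\{x:w\cdot x-h<0\}$. For hyperplanes $\mathcal H=\{H_1,\dots,H_n\}$ in $\mathbb R^d$ and an open convex set $X\subseteq\mathbb R^d$, the atom of $\sigma\subseteq[n]$ is $A_\sigma=\bigl(\bigcap_{i\in\sigma}(H_i^+\cap X)\bigr)\setminus\bigcup_{j\notin\sigma}H_j^+$ (for $\sigma=\emptyset$, $A_\emptyset=X\setminus\bigcup_{i}H_i^+$), and $\mathrm{code}(\mathcal H,X)=\{\sigma\subseteq[n]:A_\sigma\neq\emptyset\}$. The pair $(\mathcal H,X)$ is stable if $X$ is open and convex and for every $\sigma\subseteq[n]$ with $X\cap\bigcap_{i\in\sigma}H_i\neq\emptyset$, the affine subspace $\bigcap_{i\in\sigma}H_i$ has dimension $d-|\sigma|$. A stable hyperplane code is a code equal to $\mathrm{code}(\mathcal H,X)$ for some stable pair. The group $(\mathbb Z_2)^n$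 acts on $2^{[n]}$ by letting the generator $e_i$ send $\sigma$ to $\sigma\cup\{i\}$ if $i\notin\sigma$ and to $\sigma\setminus\{i\}$ if $i\in\sigma$; $g\cdot\mathcal C=\{g\cdot\sigma:\sigma\in\mathcal C\}$. $\Delta(\mathcal C)=\{\tau:\tau\subseteq\sigma\text{ for some }\sigma\in\mathcal C\}$. For a simplicial complex $\Delta$ and $\tau\subseteq$ its vertex set, $\operatorname{link}_\tau\Delta=\{\nu\in\Delta:\nu\cap\tau=\emptyset,\ \nu\cup\tau\in\Delta\}$ (the void complex $\{\}$ if $\tau\notin\Delta$). A free pair in $\Delta$ is $(\sigma,\tau)$ with $\tau$ a facet, $\sigma\subsetneq\tau$, and $\sigma$ contained in no other facet; the collapse along $\sigma$ replaces $\Delta$ by $\{\nu\in\Delta:\nu\not\supseteq\sigma\}$. $\Delta$ is collapsible if a finite sequence of collapses yields the void complex $\{\}$ (with no faces); in particular $\{\}$ is collapsible while $\{\emptyset\}$ is not. *)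

theory Defs
  imports "HOL-Analysis.Analysis"
begin

text \<open>Hyperplanes H_i = {x. w i \<bullet> x - h i = 0}, i in {1..n}, in a Euclidean space 'a (R^d, d = DIM('a)).\<close>

definition atom :: "nat \<Rightarrow> (nat \<Rightarrow> 'a::euclidean_space) \<Rightarrow> (nat \<Rightarrow> real) \<Rightarrow> 'a set \<Rightarrow> nat set \<Rightarrow> 'a set" where
  "atom n w h X \<sigma> =
     (\<Inter>i\<in>\<sigma>. {x. w i \<bullet> x - h i > 0} \<inter> X) \<inter> X
       - (\<Union>j\<in>{1..n} - \<sigma>. {x. w j \<bullet> x - h j > 0})"

definition hcode :: "nat \<Rightarrow> (nat \<Rightarrow> 'a::euclidean_space) \<Rightarrow> (nat \<Rightarrow> real) \<Rightarrow> 'a set \<Rightarrow> nat set set" where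
  "hcode n w h X = {\<sigma>. \<sigma> \<subseteq> {1..n} \<and> atom n w h X \<sigma> \<noteq> {}}"

definition stable_pair :: "nat \<Rightarrow> (nat \<Rightarrow> 'a::euclidean_space) \<Rightarrow> (nat \<Rightarrow> real) \<Rightarrow> 'a set \<Rightarrow> bool" where
  "stable_pair n w h X \<longleftrightarrow>
     (\<forall>i\<in>{1..n}. w i \<noteq> 0) \<and> open X \<and> convex X \<and>
     (\<forall>\<sigma>. \<sigma> \<subseteq> {1..n} \<longrightarrow>
        X \<inter> (\<Inter>i\<in>\<sigma>. {x. w i \<bullet> x - h i = 0}) \<noteq> {} \<longrightarrow>
        aff_dim (\<Inter>i\<in>\<sigma>. {x. w i \<bullet> x - h i = 0}) = int DIM('a) - int (card \<sigma>))"

text \<open>Bitflip action: g \<subseteq> {1..n} encodes the element sum_{i in g} e_i of (Z_2)^n.\<close>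
definition bitflip :: "nat set \<Rightarrow> nat set \<Rightarrow> nat set" where
  "bitflip g \<sigma> = (\<sigma> - g) \<union> (g - \<sigma>)"

definition Delta :: "nat set set \<Rightarrow> nat set set" where
  "Delta C = {\<tau>. \<exists>\<sigma>\<in>C. \<tau> \<subseteq> \<sigma>}"

definition link :: "nat set \<Rightarrow> nat set set \<Rightarrow> nat set set" where
  "link \<tau> K = (if \<tau> \<in> K then {\<nu>\<in>K. \<nu> \<inter> \<tau> = {} \<and> \<nu> \<union> \<tau> \<in> K} else {})"

definition facet :: "nat set set \<Rightarrow> nat set \<Rightarrow> bool" where
  "facet K \<tau> \<longleftrightarrow> \<tau> \<in> K \<and> (\<forall>\<nu>\<in>K. \<tau> \<subseteq> \<nu> \<longrightarrow> \<nu> = \<tau>)"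

definition free_pair :: "nat set set \<Rightarrow> nat set \<Rightarrow> nat set \<Rightarrow> bool" where
  "free_pair K \<sigma> \<tau> \<longleftrightarrow> facet K \<tau> \<and> \<sigma> \<subset> \<tau> \<and>
     (\<forall>\<nu>. facet K \<nu> \<and> \<sigma> \<subseteq> \<nu> \<longrightarrow> \<nu> = \<tau>)"

definition collapse :: "nat set set \<Rightarrow> nat set \<Rightarrow> nat set set" where
  "collapse K \<sigma> = {\<nu>\<in>K. \<not> \<sigma> \<subseteq> \<nu>}"

inductive collapsible :: "nat set set \<Rightarrow> bool" where
  void: "collapsible {}"
| step: "free_pair K \<sigma> \<tau> \<Longrightarrow> collapsible (collapse K \<sigma>) \<Longrightarrow> collapsible K"

end

theory Submission
  imports Defs
begin

(* Flipping the orientation of the hyperplanes indexed by g keeps the pair stable and, since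
   stability lets every codeword be realized off all hyperplanes, turns the code into its bitflip
   by g; so it suffices to treat g = 0. For \<tau> not in the code, the link of \<tau> in the complex of
   the code is the nerve of the half-spaces H_j^+ (j not in \<tau>) inside the open convex region
   X \<inter> (\<Inter>i\<in>\<tau>. H_i^+), and these half-spaces cover that region. Such nerves are
   collapsible, by induction on the number of half-spaces: cutting along H_k splits the nerve into
   the part B realized in H_k^-, the part L realized in H_k^+ and the cone over L with apex k.
   By convexity and stability, L \<inter> B is the nerve realized on H_k itself; B and L \<inter> B are
   collapsible by induction, and then so is B \<union> L \<union> k * L. *)

lemma free_pair_insert:
  assumes "insert k \<nu> \<in> K" "k \<notin> \<nu>"
    and cofaces: "\<forall>F\<in>K. \<nu> \<subseteq> F \<longrightarrow> F = \<nu> \<or> F = insert k \<nu>"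
  shows "free_pair K \<nu> (insert k \<nu>)" "collapse K \<nu> = K - {\<nu>, insert k \<nu>}"
proof -
  have facet: "facet K (insert k \<nu>)"
    unfolding facet_def using assms by blast
  have "\<not> facet K \<nu>"
    unfolding facet_def using assms by blast
  then show "free_pair K \<nu> (insert k \<nu>)"
    unfolding free_pair_def using facet cofaces assms(2) by (auto simp: facet_def)
  show "collapse K \<nu> = K - {\<nu>, insert k \<nu>}"
    unfolding collapse_def using cofaces by auto
qed

lemma free_pair_cone:
  assumes fp: "free_pair M \<sigma> \<tau>" and k: "\<forall>\<nu>\<in>B \<union> M. k \<notin> \<nu>"
  shows "free_pair (B \<union> insert k ` M) (insert k \<sigma>) (insert k \<tau>)"
    "collapse (B \<union> insert k ` M) (insert k \<sigma>) = B \<union> insert k ` collapse M \<sigma>"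
proof -
  let ?K = "B \<union> insert k ` M"
  have \<tau>: "facet M \<tau>" "\<tau> \<in> M" "\<sigma> \<subset> \<tau>"
    and \<sigma>: "\<And>F. facet M F \<Longrightarrow> \<sigma> \<subseteq> F \<Longrightarrow> F = \<tau>"
    using fp unfolding free_pair_def facet_def by auto
  have k\<sigma>: "k \<notin> \<sigma>" using k \<tau> by blast
  have cone_cofaces: "\<exists>\<nu>'\<in>M. \<nu> = insert k \<nu>' \<and> \<mu> \<subseteq> \<nu>'"
    if "\<nu> \<in> ?K" "insert k \<mu> \<subseteq> \<nu>" "k \<notin> \<mu>" for \<mu> \<nu>
    using that k by blast
  have facet_cone: "facet ?K (insert k \<mu>) \<longleftrightarrow> facet M \<mu>" if "\<mu> \<in> M" for \<mu>
  proof
    assume "facet ?K (insert k \<mu>)"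
    then have "\<nu> = \<mu>" if "\<nu> \<in> M" "\<mu> \<subseteq> \<nu>" for \<nu>
      using that \<open>\<mu> \<in> M\<close> k unfolding facet_def by (metis Diff_insert_absorb UnCI image_eqI insert_mono)
    then show "facet M \<mu>" unfolding facet_def using that by blast
  next
    assume \<mu>: "facet M \<mu>"
    have "\<nu> = insert k \<mu>" if \<nu>: "\<nu> \<in> ?K" "insert k \<mu> \<subseteq> \<nu>" for \<nu>
    proof -
      obtain \<nu>' where "\<nu>' \<in> M" "\<nu> = insert k \<nu>'" "\<mu> \<subseteq> \<nu>'"
        using cone_cofaces[OF \<nu>] k \<open>\<mu> \<in> M\<close> by blast
      then show ?thesis using \<mu> unfolding facet_def by blast
    qed
    then show "facet ?K (insert k \<mu>)"
      unfolding facet_def using \<open>\<mu> \<in> M\<close> by blast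
  qed
  have cofaces: "F = insert k \<tau>" if F: "facet ?K F" "insert k \<sigma> \<subseteq> F" for F
  proof -
    have "F \<in> ?K" using F(1) unfolding facet_def by blast
    then obtain \<mu> where "\<mu> \<in> M" "F = insert k \<mu>" "\<sigma> \<subseteq> \<mu>"
      using cone_cofaces[OF _ F(2) k\<sigma>] by blast
    then show ?thesis
      using F(1) facet_cone \<sigma> by metis
  qed
  show "free_pair ?K (insert k \<sigma>) (insert k \<tau>)"
    unfolding free_pair_def
  proof (intro conjI allI impI)
    show "facet ?K (insert k \<tau>)" using facet_cone \<tau> by blast
    show "insert k \<sigma> \<subset> insert k \<tau>" using \<tau>(2,3) k k\<sigma> by auto
  qed (use cofaces in blast)
  show "collapse ?K (insert k \<sigma>) = B \<union> insert k ` collapse M \<sigma>"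
    unfolding collapse_def using k k\<sigma> by auto
qed

lemma collapsible_union_cone_image:
  assumes "collapsible M" "collapsible B" "\<forall>\<nu>\<in>B \<union> M. k \<notin> \<nu>"
  shows "collapsible (B \<union> insert k ` M)"
  using assms
proof (induction M rule: collapsible.induct)
  case void
  then show ?case by simp
next
  case (step M \<sigma> \<tau>)
  have "\<forall>\<nu>\<in>B \<union> collapse M \<sigma>. k \<notin> \<nu>"
    using step.prems(2) unfolding collapse_def by blast
  with step.IH step.prems(1) have "collapsible (B \<union> insert k ` collapse M \<sigma>)" by blast
  then show ?case
    using collapsible.step free_pair_cone[OF step.hyps(1) step.prems(2)] by metis
qed

(* Collapse the faces of L outside B together with their cones, maximal ones first; what remains
   is B with the cone over the collapsible complex L \<inter> B attached. *)
lemma collapsible_union_cone: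
  assumes "finite L" and k: "\<forall>\<nu>\<in>B \<union> L. k \<notin> \<nu>"
    and B_closed: "\<forall>\<nu>\<in>B. \<forall>\<mu>\<subseteq>\<nu>. \<mu> \<in> B"
    and "collapsible B" "collapsible (L \<inter> B)"
  shows "collapsible (B \<union> L \<union> insert k ` L)"
  using assms(1,2,5)
proof (induction "card (L - B)" arbitrary: L rule: less_induct)
  case less
  show ?case
  proof (cases "L \<subseteq> B")
    case True
    then have "B \<union> L \<union> insert k ` L = B \<union> insert k ` (L \<inter> B)" by auto
    then show ?thesis
      using collapsible_union_cone_image less.prems(2,3) \<open>collapsible B\<close> by auto
  next
    case False
    then obtain \<nu> where \<nu>: "\<nu> \<in> L - B" and maximal: "\<forall>\<mu>\<in>L - B. \<nu> \<subseteq> \<mu> \<longrightarrow> \<mu> = \<nu>"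
      using finite_has_maximal[of "L - B"] less.prems(1) by blast
    let ?K = "B \<union> L \<union> insert k ` L" and ?L = "L - {\<nu>}"
    have k\<nu>: "k \<notin> \<nu>" using \<nu> less.prems(2) by blast
    have cofaces: "\<forall>F\<in>?K. \<nu> \<subseteq> F \<longrightarrow> F = \<nu> \<or> F = insert k \<nu>"
    proof (intro ballI impI)
      fix F assume F: "F \<in> ?K" "\<nu> \<subseteq> F"
      have above_\<nu>: "\<mu> = \<nu>" if "\<mu> \<in> L" "\<nu> \<subseteq> \<mu>" for \<mu>
        using that B_closed \<nu> maximal by blast
      from F(1) consider "F \<in> B" | "F \<in> L" | \<mu> where "\<mu> \<in> L" "F = insert k \<mu>" by blast
      then show "F = \<nu> \<or> F = insert k \<nu>"
      proof cases
        case 1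
        then show ?thesis using B_closed \<nu> F(2) by blast
      next
        case 2
        then show ?thesis using above_\<nu> F(2) by blast
      next
        case (3 \<mu>)
        then have "\<nu> \<subseteq> \<mu>" using F(2) k\<nu> by blast
        then show ?thesis using above_\<nu> 3 by blast
      qed
    qed
    have "insert k \<nu> \<in> ?K" using \<nu> by blast
    note free_pair = free_pair_insert[OF this k\<nu> cofaces]
    moreover have "?K - {\<nu>, insert k \<nu>} = B \<union> ?L \<union> insert k ` ?L"
    proof -
      have "insert k \<mu> \<noteq> insert k \<nu>" "insert k \<mu> \<noteq> \<nu>" if "\<mu> \<in> ?L" for \<mu>
      proof -
        have "k \<notin> \<mu>" "\<mu> \<noteq> \<nu>" using that less.prems(2) by auto
        then show "insert k \<mu> \<noteq> insert k \<nu>" using k\<nu> Diff_insert_absorb by metis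
        show "insert k \<mu> \<noteq> \<nu>" using k\<nu> by blast
      qed
      moreover have "insert k \<nu> \<notin> B \<union> L" using less.prems(2) by blast
      ultimately show ?thesis using \<nu> by auto
    qed
    moreover have "collapsible (B \<union> ?L \<union> insert k ` ?L)"
    proof (rule less.hyps)
      show "card (?L - B) < card (L - B)"
        using \<nu> less.prems(1) by (intro psubset_card_mono) auto
      show "finite ?L" using less.prems(1) by blast
      show "\<forall>\<mu>\<in>B \<union> ?L. k \<notin> \<mu>" using less.prems(2) by blast
      have "?L \<inter> B = L \<inter> B" using \<nu> by blast
      then show "collapsible (?L \<inter> B)" using less.prems(3) by simp
    qed
    ultimately show ?thesis using collapsible.step by (metis free_pair(1))
  qed
qed

definition flat :: "(nat \<Rightarrow> 'a::euclidean_space) \<Rightarrow> (nat \<Rightarrow> real) \<Rightarrow> nat set \<Rightarrow> 'a set" where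
  "flat w h E = {x. \<forall>i\<in>E. w i \<bullet> x = h i}"

definition codeword :: "nat \<Rightarrow> (nat \<Rightarrow> 'a::euclidean_space) \<Rightarrow> (nat \<Rightarrow> real) \<Rightarrow> 'a \<Rightarrow> nat set" where
  "codeword n w h x = {i\<in>{1..n}. h i < w i \<bullet> x}"

definition same_sides :: "nat \<Rightarrow> (nat \<Rightarrow> 'a::euclidean_space) \<Rightarrow> (nat \<Rightarrow> real) \<Rightarrow> 'a \<Rightarrow> 'a set" where
  "same_sides n w h x =
     {y. \<forall>j\<in>{1..n}. (h j < w j \<bullet> x \<longrightarrow> h j < w j \<bullet> y) \<and> (w j \<bullet> x < h j \<longrightarrow> w j \<bullet> y < h j)}"

lemma hcode_eq_codeword_image: "hcode n w h X = codeword n w h ` X"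
proof (intro set_eqI iffI)
  fix \<sigma> assume "\<sigma> \<in> hcode n w h X"
  then obtain x where "\<sigma> \<subseteq> {1..n}" "x \<in> atom n w h X \<sigma>"
    unfolding hcode_def by blast
  then have "x \<in> X" "\<sigma> = codeword n w h x"
    unfolding atom_def codeword_def by (auto split: if_splits)
  then show "\<sigma> \<in> codeword n w h ` X" by blast
next
  fix \<sigma> assume "\<sigma> \<in> codeword n w h ` X"
  then obtain x where "x \<in> X" "\<sigma> = codeword n w h x" by blast
  then show "\<sigma> \<in> hcode n w h X"
    unfolding hcode_def atom_def codeword_def by auto
qed

lemma stable_pair_Int:
  assumes "stable_pair n w h X" "open Y" "convex Y"
  shows "stable_pair n w h (X \<inter> Y)"
  using assms unfolding stable_pair_def by (auto simp: open_Int convex_Int)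

lemma stable_pair_aff_dim_flat:
  assumes "stable_pair n w h (X::'a::euclidean_space set)" "E \<subseteq> {1..n}" "X \<inter> flat w h E \<noteq> {}"
  shows "aff_dim (flat w h E) = int DIM('a) - int (card E)"
proof -
  have flat: "(\<Inter>i\<in>E. {x. w i \<bullet> x - h i = 0}) = flat w h E"
    unfolding flat_def by auto
  have "\<forall>\<sigma>\<subseteq>{1..n}. X \<inter> (\<Inter>i\<in>\<sigma>. {x. w i \<bullet> x - h i = 0}) \<noteq> {} \<longrightarrow>
      aff_dim (\<Inter>i\<in>\<sigma>. {x. w i \<bullet> x - h i = 0}) = int DIM('a) - int (card \<sigma>)"
    using assms(1) unfolding stable_pair_def by blast
  then have "X \<inter> (\<Inter>i\<in>E. {x. w i \<bullet> x - h i = 0}) \<noteq> {} \<longrightarrow>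
      aff_dim (\<Inter>i\<in>E. {x. w i \<bullet> x - h i = 0}) = int DIM('a) - int (card E)"
    using assms(2) by blast
  then show ?thesis using assms(3) unfolding flat by blast
qed

lemma stable_pair_transversal:
  assumes st: "stable_pair n w h (X::'a::euclidean_space set)"
    and x: "x \<in> X" "x \<in> flat w h (insert k E)"
    and E: "E \<subseteq> {1..n}" and k: "k \<in> {1..n}" "k \<notin> E"
  shows "\<exists>v. (\<forall>i\<in>E. w i \<bullet> v = 0) \<and> w k \<bullet> v \<noteq> 0"
proof (rule ccontr)
  assume "\<not> ?thesis"
  then have no_v: "w k \<bullet> v = 0" if "\<forall>i\<in>E. w i \<bullet> v = 0" for v
    using that by blast
  have "flat w h E \<subseteq> flat w h (insert k E)"
  proof
    fix y assume y: "y \<in> flat w h E"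
    have "\<forall>i\<in>E. w i \<bullet> (y - x) = 0"
      using x(2) y unfolding flat_def by (simp add: inner_diff_right)
    then have "w k \<bullet> (y - x) = 0" by (rule no_v)
    then show "y \<in> flat w h (insert k E)"
      using x(2) y unfolding flat_def by (simp add: inner_diff_right)
  qed
  then have "flat w h E = flat w h (insert k E)"
    unfolding flat_def by auto
  moreover have "aff_dim (flat w h E) = int DIM('a) - int (card E)"
    using stable_pair_aff_dim_flat[OF st E] x unfolding flat_def by blast
  moreover have "aff_dim (flat w h (insert k E)) = int DIM('a) - int (card (insert k E))"
    using stable_pair_aff_dim_flat[OF st] E k x by blast
  moreover have "card (insert k E) = card E + 1"
    using k finite_subset[OF E] by simp
  ultimately show False by simp
qed

lemma open_ray_step:
  fixes x v :: "'a::real_normed_vector"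
  assumes "open U" "x \<in> U"
  shows "\<exists>t>0. x + t *\<^sub>R v \<in> U"
proof -
  obtain e where "e > 0" "ball x e \<subseteq> U"
    using assms open_contains_ball by blast
  define t where "t = e / (norm v + 1)"
  have "t > 0" "t * norm v < e"
    using \<open>e > 0\<close> unfolding t_def by (auto simp: field_simps add_pos_nonneg)
  then have "x + t *\<^sub>R v \<in> ball x e" by (simp add: dist_norm)
  then show ?thesis using \<open>t > 0\<close> \<open>ball x e \<subseteq> U\<close> by blast
qed

lemma open_same_sides: "open (same_sides n w h x)"
proof -
  have "same_sides n w h x =
      (\<Inter>j\<in>{j\<in>{1..n}. h j < w j \<bullet> x}. {y. w j \<bullet> y > h j}) \<inter>
      (\<Inter>j\<in>{j\<in>{1..n}. w j \<bullet> x < h j}. {y. w j \<bullet> y < h j})"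
    unfolding same_sides_def by auto
  then show ?thesis
    by (simp add: open_Int open_INT open_halfspace_gt open_halfspace_lt)
qed

lemma same_sides_refl: "x \<in> same_sides n w h x"
  unfolding same_sides_def by simp

lemma stable_pair_push_off:
  assumes st: "stable_pair n w h (X::'a::euclidean_space set)"
    and x: "x \<in> X" "x \<in> flat w h (insert k E)"
    and E: "E \<subseteq> {1..n}" and k: "k \<in> {1..n}" "k \<notin> E" and "s \<noteq> 0"
  shows "\<exists>y\<in>X \<inter> flat w h E \<inter> same_sides n w h x. (w k \<bullet> y - h k) * s > 0"
proof -
  obtain v0 where v0: "\<forall>i\<in>E. w i \<bullet> v0 = 0" "w k \<bullet> v0 \<noteq> 0"
    using stable_pair_transversal[OF assms(1-6)] by blast
  define v where "v = (s / (w k \<bullet> v0)) *\<^sub>R v0"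
  have v: "\<forall>i\<in>E. w i \<bullet> v = 0" "w k \<bullet> v = s"
    using v0 unfolding v_def by auto
  have "open (X \<inter> same_sides n w h x)"
    using st open_same_sides unfolding stable_pair_def by blast
  moreover have "x \<in> X \<inter> same_sides n w h x"
    using x(1) same_sides_refl by blast
  ultimately obtain t where "t > 0" and y: "x + t *\<^sub>R v \<in> X \<inter> same_sides n w h x"
    using open_ray_step by blast
  have "x + t *\<^sub>R v \<in> flat w h E"
    using x(2) v(1) unfolding flat_def by (simp add: inner_add_right)
  with y have y_in: "x + t *\<^sub>R v \<in> X \<inter> flat w h E \<inter> same_sides n w h x" by blast
  have "w k \<bullet> (x + t *\<^sub>R v) - h k = t * s"
    using x(2) v(2) unfolding flat_def by (simp add: inner_add_right)
  then have "(w k \<bullet> (x + t *\<^sub>R v) - h k) * s = t * (s * s)"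
    by (simp only: mult.assoc)
  moreover have "s * s > 0" using \<open>s \<noteq> 0\<close> not_real_square_gt_zero by blast
  ultimately have "(w k \<bullet> (x + t *\<^sub>R v) - h k) * s > 0"
    using \<open>t > 0\<close> by (simp only: mult_pos_pos)
  with y_in show ?thesis by blast
qed

lemma codeword_mono_same_sides:
  "y \<in> same_sides n w h x \<Longrightarrow> codeword n w h x \<subseteq> codeword n w h y"
  unfolding same_sides_def codeword_def by auto

lemma stable_pair_generic_point:
  assumes st: "stable_pair n w h (X::'a::euclidean_space set)" and "x \<in> X"
  shows "\<exists>y\<in>X. (\<forall>i\<in>{1..n}. w i \<bullet> y \<noteq> h i) \<and> codeword n w h y = codeword n w h x"
  using \<open>x \<in> X\<close>
proof (induction "card {i\<in>{1..n}. w i \<bullet> x = h i}" arbitrary: x rule: less_induct)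
  case less
  define S where "S = {i\<in>{1..n}. w i \<bullet> x = h i}"
  show ?case
  proof (cases "S = {}")
    case True
    then show ?thesis using less.prems unfolding S_def by blast
  next
    case False
    then obtain k where "k \<in> S" by blast
    define E where "E = S - {k}"
    have S: "S = insert k E" "k \<notin> E" "E \<subseteq> {1..n}" "k \<in> {1..n}"
      using \<open>k \<in> S\<close> unfolding E_def S_def by auto
    have x_flat: "x \<in> flat w h (insert k E)"
      using S(1) unfolding S_def flat_def by auto
    obtain y where y: "y \<in> X" "y \<in> flat w h E" "y \<in> same_sides n w h x"
        and "(w k \<bullet> y - h k) * -1 > 0"
      using stable_pair_push_off[OF st less.prems x_flat S(3,4,2), of "-1"] by auto
    then have yk: "w k \<bullet> y < h k" by simp
    have on_x: "w i \<bullet> x = h i" if "i \<in> {1..n}" "w i \<bullet> y = h i" for i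
    proof -
      have "(h i < w i \<bullet> x \<longrightarrow> h i < w i \<bullet> y) \<and> (w i \<bullet> x < h i \<longrightarrow> w i \<bullet> y < h i)"
        using y(3) that(1) unfolding same_sides_def by blast
      with that(2) show ?thesis by linarith
    qed
    have zeros_y: "{i\<in>{1..n}. w i \<bullet> y = h i} = E"
    proof
      show "{i\<in>{1..n}. w i \<bullet> y = h i} \<subseteq> E"
        using on_x yk S(1) unfolding S_def by fastforce
      show "E \<subseteq> {i\<in>{1..n}. w i \<bullet> y = h i}"
        using y(2) S(3) unfolding flat_def by auto
    qed
    have "codeword n w h y \<subseteq> codeword n w h x"
    proof
      fix i assume i: "i \<in> codeword n w h y"
      then have "i \<notin> S"
        using yk y(2) S(1) unfolding codeword_def flat_def by auto
      then show "i \<in> codeword n w h x"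
        using i y(3) unfolding S_def codeword_def same_sides_def by force
    qed
    then have "codeword n w h y = codeword n w h x"
      using codeword_mono_same_sides[OF y(3)] by blast
    moreover have "card E < card S"
      using S(1,2) finite_subset[OF S(3)] by simp
    ultimately show ?thesis
      using less.hyps[of y] y(1) zeros_y unfolding S_def by auto
  qed
qed

lemma hcode_eq_generic_codewords:
  assumes "stable_pair n w h (X::'a::euclidean_space set)"
  shows "hcode n w h X = codeword n w h ` {y\<in>X. \<forall>i\<in>{1..n}. w i \<bullet> y \<noteq> h i}"
  unfolding hcode_eq_codeword_image
  using stable_pair_generic_point[OF assms] by (auto simp: image_iff) metis

definition flip_sign :: "nat set \<Rightarrow> (nat \<Rightarrow> 'b::uminus) \<Rightarrow> nat \<Rightarrow> 'b" where
  "flip_sign g f i = (if i \<in> g then - f i else f i)"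

lemma flip_sign_hyperplane_eq:
  "flip_sign g w i \<bullet> x = flip_sign g h i \<longleftrightarrow> w i \<bullet> x = h i"
  unfolding flip_sign_def by auto

lemma stable_pair_flip_sign:
  assumes "stable_pair n w h X"
  shows "stable_pair n (flip_sign g w) (flip_sign g h) X"
proof -
  have "{x. flip_sign g w i \<bullet> x - flip_sign g h i = 0} = {x. w i \<bullet> x - h i = 0}" for i
    using flip_sign_hyperplane_eq by force
  moreover have "flip_sign g w i \<noteq> 0 \<longleftrightarrow> w i \<noteq> 0" for i
    unfolding flip_sign_def by simp
  ultimately show ?thesis
    using assms unfolding stable_pair_def by presburger
qed

lemma codeword_flip_sign:
  assumes "g \<subseteq> {1..n}" "\<forall>i\<in>{1..n}. w i \<bullet> y \<noteq> h i"
  shows "codeword n (flip_sign g w) (flip_sign g h) y = bitflip g (codeword n w h y)"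
  using assms unfolding codeword_def bitflip_def flip_sign_def by (force simp: not_less)

lemma hcode_flip_sign:
  assumes st: "stable_pair n w h (X::'a::euclidean_space set)" and g: "g \<subseteq> {1..n}"
  shows "hcode n (flip_sign g w) (flip_sign g h) X = bitflip g ` hcode n w h X"
proof -
  let ?G = "{y\<in>X. \<forall>i\<in>{1..n}. w i \<bullet> y \<noteq> h i}"
  have "{y\<in>X. \<forall>i\<in>{1..n}. flip_sign g w i \<bullet> y \<noteq> flip_sign g h i} = ?G"
    using flip_sign_hyperplane_eq by blast
  then have "hcode n (flip_sign g w) (flip_sign g h) X = codeword n (flip_sign g w) (flip_sign g h) ` ?G"
    using hcode_eq_generic_codewords[OF stable_pair_flip_sign[OF st]] by simp
  also have "\<dots> = bitflip g ` codeword n w h ` ?G"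
    unfolding image_image using codeword_flip_sign[OF g] by (intro image_cong) auto
  also have "\<dots> = bitflip g ` hcode n w h X"
    using hcode_eq_generic_codewords[OF st] by simp
  finally show ?thesis .
qed

definition nerve :: "(nat \<Rightarrow> 'a::euclidean_space) \<Rightarrow> (nat \<Rightarrow> real) \<Rightarrow> nat set \<Rightarrow> 'a set \<Rightarrow> nat set set" where
  "nerve w h J U = {\<nu>. \<nu> \<subseteq> J \<and> (\<exists>x\<in>U. \<forall>j\<in>\<nu>. h j < w j \<bullet> x)}"

lemma nerve_downward_closed: "\<forall>\<nu>\<in>nerve w h J U. \<forall>\<mu>\<subseteq>\<nu>. \<mu> \<in> nerve w h J U"
  unfolding nerve_def by blast

lemma finite_nerve: "finite J \<Longrightarrow> finite (nerve w h J U)"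
  by (rule finite_subset[of _ "Pow J"]) (auto simp: nerve_def)

lemma convex_flat: "convex (flat w h E)"
proof -
  have "flat w h E = (\<Inter>i\<in>E. {x. w i \<bullet> x = h i})"
    unfolding flat_def by auto
  then show ?thesis by (simp add: convex_INT convex_hyperplane)
qed

lemma nerve_split:
  assumes st: "stable_pair n w h (X::'a::euclidean_space set)"
    and E: "E \<subseteq> {1..n}" and J: "J \<subseteq> {1..n}" and k: "k \<in> J" "k \<notin> E"
  defines "L \<equiv> nerve w h (J - {k}) (X \<inter> {x. h k < w k \<bullet> x} \<inter> flat w h E)"
  shows "nerve w h J (X \<inter> flat w h E) =
    nerve w h (J - {k}) (X \<inter> {x. w k \<bullet> x < h k} \<inter> flat w h E) \<union> L \<union> insert k ` L"
    (is "?N = ?B \<union> L \<union> insert k ` L")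
proof
  show "?N \<subseteq> ?B \<union> L \<union> insert k ` L"
  proof
    fix \<nu> assume "\<nu> \<in> ?N"
    then obtain x where \<nu>: "\<nu> \<subseteq> J" and x: "x \<in> X" "x \<in> flat w h E" "\<forall>j\<in>\<nu>. h j < w j \<bullet> x"
      unfolding nerve_def by blast
    have "\<exists>y\<in>X \<inter> flat w h E. w k \<bullet> y \<noteq> h k \<and> (\<forall>j\<in>\<nu>. h j < w j \<bullet> y)"
    proof (cases "w k \<bullet> x = h k")
      case True
      then have "x \<in> flat w h (insert k E)" using x(2) unfolding flat_def by simp
      moreover have "k \<in> {1..n}" using k J by blast
      ultimately obtain y where y: "y \<in> X \<inter> flat w h E \<inter> same_sides n w h x" "(w k \<bullet> y - h k) * 1 > 0"
        using stable_pair_push_off[OF st x(1) _ E _ k(2), of 1] by auto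
      then have "\<forall>j\<in>\<nu>. h j < w j \<bullet> y"
        using x(3) \<nu> J unfolding same_sides_def by blast
      with y show ?thesis by (intro bexI[of _ y]) auto
    qed (use x in blast)
    then obtain y where y: "y \<in> X" "y \<in> flat w h E" "w k \<bullet> y \<noteq> h k" "\<forall>j\<in>\<nu>. h j < w j \<bullet> y"
      by blast
    show "\<nu> \<in> ?B \<union> L \<union> insert k ` L"
    proof (cases "w k \<bullet> y < h k")
      case True
      then have "k \<notin> \<nu>" using y(4) by fastforce
      then have "\<nu> \<in> ?B" using True y \<nu> unfolding nerve_def by auto
      then show ?thesis by blast
    next
      case False
      then have "\<nu> - {k} \<in> L" using y \<nu> unfolding L_def nerve_def by auto
      moreover have "\<nu> = \<nu> - {k} \<or> \<nu> = insert k (\<nu> - {k})" by blast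
      ultimately show ?thesis by (metis UnCI image_eqI)
    qed
  qed
  show "?B \<union> L \<union> insert k ` L \<subseteq> ?N"
  proof -
    have "?B \<subseteq> ?N" "L \<subseteq> ?N"
      unfolding L_def nerve_def by blast+
    moreover have "insert k ` L \<subseteq> ?N"
      unfolding L_def nerve_def using k by blast
    ultimately show ?thesis by blast
  qed
qed

lemma nerve_sides_inter:
  assumes st: "stable_pair n w h (X::'a::euclidean_space set)"
    and E: "E \<subseteq> {1..n}" and J: "J \<subseteq> {1..n}" and k: "k \<in> J" "k \<notin> E"
  shows "nerve w h (J - {k}) (X \<inter> {x. h k < w k \<bullet> x} \<inter> flat w h E) \<inter>
           nerve w h (J - {k}) (X \<inter> {x. w k \<bullet> x < h k} \<inter> flat w h E) =
         nerve w h (J - {k}) (X \<inter> flat w h (insert k E))"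
proof (intro set_eqI iffI)
  fix \<nu>
  assume "\<nu> \<in> nerve w h (J - {k}) (X \<inter> {x. h k < w k \<bullet> x} \<inter> flat w h E) \<inter>
           nerve w h (J - {k}) (X \<inter> {x. w k \<bullet> x < h k} \<inter> flat w h E)"
  then obtain y z where \<nu>: "\<nu> \<subseteq> J - {k}"
    and y: "y \<in> X \<inter> flat w h E \<inter> {x. \<forall>j\<in>\<nu>. h j < w j \<bullet> x}" "h k < w k \<bullet> y"
    and z: "z \<in> X \<inter> flat w h E \<inter> {x. \<forall>j\<in>\<nu>. h j < w j \<bullet> x}" "w k \<bullet> z < h k"
    unfolding nerve_def by auto
  have conv: "convex (X \<inter> flat w h E \<inter> {x. \<forall>j\<in>\<nu>. h j < w j \<bullet> x})"
  proof -
    have "{x. \<forall>j\<in>\<nu>. h j < w j \<bullet> x} = (\<Inter>j\<in>\<nu>. {x. w j \<bullet> x > h j})" by auto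
    then show ?thesis
      using st unfolding stable_pair_def
      by (simp add: convex_Int convex_flat convex_INT convex_halfspace_gt)
  qed
  obtain p where "p \<in> X \<inter> flat w h E \<inter> {x. \<forall>j\<in>\<nu>. h j < w j \<bullet> x}" "w k \<bullet> p = h k"
    using connected_ivt_hyperplane[OF convex_connected[OF conv] z(1) y(1), of "w k" "h k"] y(2) z(2)
    by auto
  then show "\<nu> \<in> nerve w h (J - {k}) (X \<inter> flat w h (insert k E))"
    using \<nu> unfolding nerve_def flat_def by auto
next
  fix \<nu> assume "\<nu> \<in> nerve w h (J - {k}) (X \<inter> flat w h (insert k E))"
  then obtain x where \<nu>: "\<nu> \<subseteq> J - {k}" and x: "x \<in> X" "x \<in> flat w h (insert k E)"
      "\<forall>j\<in>\<nu>. h j < w j \<bullet> x"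
    unfolding nerve_def by blast
  have "k \<in> {1..n}" using k J by blast
  have "\<exists>y\<in>X \<inter> flat w h E. (w k \<bullet> y - h k) * s > 0 \<and> (\<forall>j\<in>\<nu>. h j < w j \<bullet> y)"
    if s: "s \<noteq> 0" for s
  proof -
    obtain y where "y \<in> X \<inter> flat w h E \<inter> same_sides n w h x" "(w k \<bullet> y - h k) * s > 0"
      using stable_pair_push_off[OF st x(1,2) E \<open>k \<in> {1..n}\<close> k(2) s] by blast
    moreover have "\<forall>j\<in>\<nu>. h j < w j \<bullet> y"
      using calculation(1) x(3) \<nu> J unfolding same_sides_def by blast
    ultimately show ?thesis by blast
  qed
  from this[of 1] this[of "-1"] \<nu>
  show "\<nu> \<in> nerve w h (J - {k}) (X \<inter> {x. h k < w k \<bullet> x} \<inter> flat w h E) \<inter>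
           nerve w h (J - {k}) (X \<inter> {x. w k \<bullet> x < h k} \<inter> flat w h E)"
    unfolding nerve_def by auto
qed

lemma collapsible_nerve:
  assumes "stable_pair n w h (X::'a::euclidean_space set)"
    and "E \<subseteq> {1..n}" "J \<subseteq> {1..n}" "J \<inter> E = {}"
    and "\<forall>x\<in>X \<inter> flat w h E. \<exists>j\<in>J. h j < w j \<bullet> x"
  shows "collapsible (nerve w h J (X \<inter> flat w h E))"
  using assms
proof (induction "card J" arbitrary: X E J rule: less_induct)
  case less
  note st = less.prems(1) and E = less.prems(2) and J = less.prems(3)
    and JE = less.prems(4) and cover = less.prems(5)
  show ?case
  proof (cases "X \<inter> flat w h E = {}")
    case True
    then have "nerve w h J (X \<inter> flat w h E) = {}" unfolding nerve_def by auto
    then show ?thesis by (simp add: collapsible.void)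
  next
    case False
    then obtain k where k: "k \<in> J" using cover by blast
    let ?J = "J - {k}"
    have "finite J" using J finite_subset by blast
    then have card: "card ?J < card J" using k by (meson card_Diff1_less)
    have kE: "k \<notin> E" using k JE by blast
    define B where "B = nerve w h ?J (X \<inter> {x. w k \<bullet> x < h k} \<inter> flat w h E)"
    define L where "L = nerve w h ?J (X \<inter> {x. h k < w k \<bullet> x} \<inter> flat w h E)"
    have "stable_pair n w h (X \<inter> {x. w k \<bullet> x < h k})"
      using st by (simp add: stable_pair_Int open_halfspace_lt convex_halfspace_lt)
    moreover have "?J \<subseteq> {1..n}" "?J \<inter> E = {}" using J JE by auto
    moreover have "\<forall>x\<in>X \<inter> {x. w k \<bullet> x < h k} \<inter> flat w h E. \<exists>j\<in>?J. h j < w j \<bullet> x"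
      using cover by fastforce
    ultimately have B: "collapsible B"
      unfolding B_def using less.hyps[OF card _ E] by blast
    have "collapsible (L \<inter> B)"
    proof -
      have "L \<inter> B = nerve w h ?J (X \<inter> flat w h (insert k E))"
        unfolding L_def B_def by (rule nerve_sides_inter[OF st E J k kE])
      moreover have "\<forall>x\<in>X \<inter> flat w h (insert k E). \<exists>j\<in>?J. h j < w j \<bullet> x"
        using cover unfolding flat_def by fastforce
      moreover have "insert k E \<subseteq> {1..n}" "?J \<inter> insert k E = {}" using E J JE k by auto
      ultimately show ?thesis
        using less.hyps[OF card st] \<open>?J \<subseteq> {1..n}\<close> by presburger
    qed
    moreover have "finite L" unfolding L_def using \<open>finite J\<close> by (simp add: finite_nerve)
    moreover have "\<forall>\<nu>\<in>B \<union> L. k \<notin> \<nu>" unfolding B_def L_def nerve_def by blast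
    moreover have "\<forall>\<nu>\<in>B. \<forall>\<mu>\<subseteq>\<nu>. \<mu> \<in> B" unfolding B_def by (rule nerve_downward_closed)
    ultimately have "collapsible (B \<union> L \<union> insert k ` L)"
      using collapsible_union_cone B by blast
    moreover have "nerve w h J (X \<inter> flat w h E) = B \<union> L \<union> insert k ` L"
      unfolding B_def L_def by (rule nerve_split[OF st E J k kE])
    ultimately show ?thesis by simp
  qed
qed

lemma mem_Delta_hcode: "\<tau> \<in> Delta (hcode n w h X) \<longleftrightarrow> (\<exists>x\<in>X. \<tau> \<subseteq> codeword n w h x)"
  unfolding Delta_def hcode_eq_codeword_image by blast

lemma link_Delta_hcode_eq_nerve:
  assumes "\<tau> \<subseteq> {1..n}" "\<tau> \<in> Delta (hcode n w h X)"
  shows "link \<tau> (Delta (hcode n w h X)) =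
    nerve w h ({1..n} - \<tau>) (X \<inter> {x. \<forall>i\<in>\<tau>. h i < w i \<bullet> x} \<inter> flat w h {})"
proof -
  let ?K = "Delta (hcode n w h X)"
  have "link \<tau> ?K = {\<nu>. \<nu> \<inter> \<tau> = {} \<and> \<nu> \<union> \<tau> \<in> ?K}"
    using assms(2) unfolding link_def Delta_def by auto
  also have "\<dots> = nerve w h ({1..n} - \<tau>) (X \<inter> {x. \<forall>i\<in>\<tau>. h i < w i \<bullet> x} \<inter> flat w h {})"
    using assms(1) unfolding mem_Delta_hcode nerve_def flat_def codeword_def by blast
  finally show ?thesis .
qed

lemma collapsible_link_Delta_hcode:
  assumes st: "stable_pair n w h (X::'a::euclidean_space set)"
    and \<tau>: "\<tau> \<subseteq> {1..n}" "\<tau> \<notin> hcode n w h X"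
  shows "collapsible (link \<tau> (Delta (hcode n w h X)))"
proof (cases "\<tau> \<in> Delta (hcode n w h X)")
  case False
  then show ?thesis unfolding link_def by (simp add: collapsible.void)
next
  case True
  define P where "P = {x. \<forall>i\<in>\<tau>. h i < w i \<bullet> x}"
  have "P = (\<Inter>i\<in>\<tau>. {x. w i \<bullet> x > h i})" unfolding P_def by auto
  moreover have "finite \<tau>" using \<tau>(1) finite_subset by blast
  ultimately have "open P" "convex P"
    by (simp_all add: open_INT open_halfspace_gt convex_INT convex_halfspace_gt)
  then have "stable_pair n w h (X \<inter> P)" using stable_pair_Int[OF st] by blast
  moreover have "\<exists>j\<in>{1..n} - \<tau>. h j < w j \<bullet> x" if "x \<in> X \<inter> P \<inter> flat w h {}" for x
  proof -
    have "codeword n w h x \<noteq> \<tau>"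
      using that \<tau>(2) unfolding hcode_eq_codeword_image by blast
    moreover have "\<tau> \<subseteq> codeword n w h x"
      using that \<tau>(1) unfolding P_def codeword_def by auto
    ultimately show ?thesis unfolding codeword_def by blast
  qed
  ultimately have "collapsible (nerve w h ({1..n} - \<tau>) (X \<inter> P \<inter> flat w h {}))"
    by (intro collapsible_nerve) auto
  then show ?thesis
    using link_Delta_hcode_eq_nerve[OF \<tau>(1) True] unfolding P_def by simp
qed

theorem theoremA:
  fixes n :: nat and w :: "nat \<Rightarrow> 'a::euclidean_space" and h :: "nat \<Rightarrow> real" and X :: "'a set"
  assumes "stable_pair n w h X"
  shows "\<not> (\<exists>g \<tau>. g \<subseteq> {1..n} \<and> \<tau> \<subseteq> {1..n} \<and>
              \<tau> \<notin> bitflip g ` hcode n w h X \<and>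
              \<not> collapsible (link \<tau> (Delta (bitflip g ` hcode n w h X))))"
proof (intro notI, elim exE conjE)
  fix g \<tau>
  assume g: "g \<subseteq> {1..n}" and \<tau>: "\<tau> \<subseteq> {1..n}" "\<tau> \<notin> bitflip g ` hcode n w h X"
    and "\<not> collapsible (link \<tau> (Delta (bitflip g ` hcode n w h X)))"
  moreover have "bitflip g ` hcode n w h X = hcode n (flip_sign g w) (flip_sign g h) X"
    using hcode_flip_sign[OF assms g] by simp
  ultimately show False
    using collapsible_link_Delta_hcode[OF stable_pair_flip_sign[OF assms] \<tau>(1)] by simp
qed

end
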